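(* Let $w$ be an infinite word and $n,n',n''$ non-negative integers with $n'\le n''\le n+n'$. Assume the prefixes of $w$ of lengths $n$, $n'$, $n''$ are palindromes, denoted $a$, $a'$, $a''$ respectively, and let $a_0$ be the prefix of $w$ of length $n+n'-n''$. Then: (1) there is a word $b$ such that $a=a_0b$ and $a''=a'b$; (2) if $n''\ge n-n'$, then $a_0$ is a palindrome.
   Context: Infinite words are right-infinite sequences of letters; a finite word is a palindrome if it equals its reversal, the empty word being a palindrome. *)

theory Defs
  imports Main
begin

definition pref :: "(nat \<Rightarrow> 'a) \<Rightarrow> nat \<Rightarrow> 'a list" where
  "pref w k = map w [0..<k]"

definition palindrome :: "'a list \<Rightarrow> bool" where
  "palindrome x \<longleftrightarrow> rev x = x"

end

theory Submission
  imports Defs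
begin

text \<open>Put \<open>d = n'' - n'\<close> and \<open>m = n + n' - n''\<close>, so \<open>|a| = d + m\<close> and \<open>|a''| = d + n'\<close>.
  Reversing a palindrome of length \<open>d + l\<close> shows that it ends with the reversal of its prefix
  of length \<open>d\<close>, and that its prefix of length \<open>l\<close> is the reversal of the \<open>l\<close> letters following
  that prefix.  Applied to \<open>a\<close> and \<open>a''\<close> the first fact gives (1) with \<open>b = rev (pref w d)\<close>.
  The second one says that \<open>rev a\<^sub>0\<close> and \<open>rev a' = a'\<close> are both read in \<open>w\<close> from position \<open>d\<close>, so
  \<open>a\<^sub>0\<close> and its reversal share their first \<open>min m n'\<close> letters; when \<open>m \<le> 2 n'\<close> these cover
  at least half of \<open>a\<^sub>0\<close>, which forces \<open>a\<^sub>0\<close> to be a palindrome.\<close>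

lemma length_pref [simp]: "length (pref w k) = k"
  by (simp add: pref_def)

lemma take_pref [simp]: "take k (pref w n) = pref w (min k n)"
  by (cases "k \<le> n") (simp_all add: pref_def take_map take_upt)

lemma pref_add: "pref w (k + l) = pref w k @ pref (\<lambda>i. w (k + i)) l"
  by (rule nth_equalityI) (auto simp: pref_def nth_append)

lemma palindrome_pref_add:
  assumes "palindrome (pref w (k + l))"
  shows "pref w (k + l) = pref w l @ rev (pref w k)"
    and "rev (pref w l) = pref (\<lambda>i. w (k + i)) l"
proof -
  let ?c = "pref (\<lambda>i. w (k + i)) l"
  have "pref w (k + l) = rev (pref w k @ ?c)"
    using assms pref_add[of w k l] by (simp add: palindrome_def)
  then have rev_split: "pref w (k + l) = rev ?c @ rev (pref w k)" by simp
  then have "pref w l = rev ?c"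
    using take_pref[of l w "k + l"] by simp
  with rev_split show "pref w (k + l) = pref w l @ rev (pref w k)"
    and "rev (pref w l) = ?c" by simp_all
qed

lemma palindromeI_take_rev:
  assumes take_eq: "take k x = take k (rev x)" and len: "length x \<le> 2 * k"
  shows "palindrome x"
  unfolding palindrome_def
proof (rule nth_equalityI)
  fix i assume i: "i < length (rev x)"
  let ?m = "length x"
  have low: "x ! j = rev x ! j" if "j < k" "j < ?m" for j
    using take_eq that by (metis nth_take)
  show "rev x ! i = x ! i"
  proof (cases "i < k")
    case True
    then show ?thesis using low i by simp
  next
    case False
    then have "?m - 1 - i < k" using len i by simp
    then have "x ! (?m - 1 - i) = rev x ! (?m - 1 - i)" using low i by simp
    then show ?thesis using i by (simp add: rev_nth)
  qed
qed simp

theorem lemma5p2: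
  fixes w :: "nat \<Rightarrow> 'a" and n n' n'' :: nat
  assumes "n' \<le> n''" and "n'' \<le> n + n'"
    and "palindrome (pref w n)" and "palindrome (pref w n')" and "palindrome (pref w n'')"
  shows "(\<exists>b. pref w n = pref w (n + n' - n'') @ b \<and> pref w n'' = pref w n' @ b)
       \<and> (n'' \<ge> n - n' \<longrightarrow> palindrome (pref w (n + n' - n'')))"
proof -
  define d m where "d = n'' - n'" and "m = n + n' - n''"
  have n: "n = d + m" and n'': "n'' = d + n'" using assms(1,2) by (simp_all add: d_def m_def)
  note a = palindrome_pref_add[of w d m, folded n, OF assms(3)]
  note a'' = palindrome_pref_add[of w d n', folded n'', OF assms(5)]
  have "palindrome (pref w m)" if "n'' \<ge> n - n'"
  proof (rule palindromeI_take_rev)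
    let ?k = "min m n'"
    have "pref w n' = pref (\<lambda>i. w (d + i)) n'"
      using a''(2) assms(4) by (simp add: palindrome_def)
    then have "take ?k (pref w m) = take ?k (pref (\<lambda>i. w (d + i)) n')"
      using take_pref[of ?k w n'] by (simp add: min.commute)
    also have "\<dots> = take ?k (rev (pref w m))" by (simp add: a(2) min.commute)
    finally show "take ?k (pref w m) = take ?k (rev (pref w m))" .
    show "length (pref w m) \<le> 2 * ?k" using that by (simp add: m_def)
  qed
  then show ?thesis using a(1) a''(1) by (auto simp: m_def)
qed

end
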